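(* Let $d\ge1$ and $T>0$. Let $v_\textup{d}:\mathbb{R}^d\to\mathbb{R}^d$ be Lipschitz continuous and let $\mathcal{K}:\mathbb{R}^d\to\mathbb{R}^d$ be Lipschitz continuous and compactly supported in $B_R(0)$. Fix $\alpha,\beta\in\mathbb{R}$ with $\alpha+\beta\ge1$ and, for each $N\ge1$, use the interaction kernel $K^N_{\alpha,\beta}(z)=N^{-\alpha}\mathcal{K}(z/N^\beta)$. For each $N\ge1$ let $\bar X^{1},\dots,\bar X^{N}\in\mathbb{R}^d$ (depending on $N$) be distinct points, $\bar\epsilon^N=\sum_{i=1}^N\delta_{\bar X^i}$, let $f:\mathbb{R}^d\to\mathbb{R}$ be nonnegative with $\operatorname{supp}f\subseteq\overline{B_1(0)}$ and $\int_{B_1(0)}f=1$, let $r=r_N>0$ satisfy $r_N<\frac12\min_{i\ne j}|\bar X^j-\bar X^i|$, and let $\bar\rho^N$ be the measure with density $\sum_{i=1}^Nr_N^{-d}f((x-\bar X^i)/r_N)$. Let $\epsilon^N_\cdot,\rho^N_\cdot\in C([0,T];\mathcal{M}^N_1(\mathbb{R}^d))$ be the solutions of the Cauchy problem with interaction kernel $K^N_{\alpha,\beta}$ and initial data $\bar\epsilon^N$ and $\bar\rho^N$ respectively. If $r_N=o(N^{-1})$ as $N\to\infty$, then \[ \lim_{N\to\infty}W_1(\epsilon^N_t,\rho^N_t)=0\qquad\forall\,t\in(0,T]. \]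
   Context: $\mathcal{M}^N_1(\mathbb{R}^d)$ is the set of positive Borel measures on $\mathbb{R}^d$ with total mass $N$ and finite first moment. For $\mu,\nu\in\mathcal{M}^N_1(\mathbb{R}^d)$, $W_1(\mu,\nu)=\inf_{\pi\in\Pi(\mu,\nu)}\int|x-y|\,d\pi(x,y)$, where $\Pi(\mu,\nu)$ is the set of measures on $\mathbb{R}^d\times\mathbb{R}^d$ with marginals $\mu$ and $\nu$. With interaction kernel $K$, the velocity is $v[\mu](x)=v_\textup{d}(x)-\int K(y-x)\,d\mu(y)$. A solution of the Cauchy problem $\partial_t\mu_t+\nabla\cdot(\mu_tv[\mu_t])=0$, $\mu_0=\bar\mu$, on $[0,T]$ is a curve $\mu_\cdot\in C([0,T];\mathcal{M}^N_1(\mathbb{R}^d))$ (weak solution) given by $\mu_t=\gamma_t\#\bar\mu$ (push-forward), where the flow map satisfies $\gamma_t(x)=x+\int_0^tv[\mu_s](\gamma_s(x))\,ds$. *)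

theory Defs
  imports "HOL-Probability.Probability" "HOL-Library.Landau_Symbols"
begin

definition M1 :: "real \<Rightarrow> ('a::euclidean_space) measure \<Rightarrow> bool" where
  "M1 N \<mu> \<longleftrightarrow> sets \<mu> = sets borel \<and> emeasure \<mu> (space \<mu>) = ennreal N
      \<and> (\<integral>\<^sup>+ x. ennreal (norm x) \<partial>\<mu>) < \<infinity>"

definition couplings :: "('a::euclidean_space) measure \<Rightarrow> 'a measure \<Rightarrow> ('a \<times> 'a) measure set" where
  "couplings \<mu> \<nu> = {\<pi>. sets \<pi> = sets borel \<and> distr \<pi> borel fst = \<mu> \<and> distr \<pi> borel snd = \<nu>}"

definition W1 :: "('a::euclidean_space) measure \<Rightarrow> 'a measure \<Rightarrow> ennreal" where
  "W1 \<mu> \<nu> = (INF \<pi>\<in>couplings \<mu> \<nu>. \<integral>\<^sup>+ p. ennreal (norm (fst p - snd p)) \<partial>\<pi>)"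

definition vel :: "('a::euclidean_space \<Rightarrow> 'a) \<Rightarrow> ('a \<Rightarrow> 'a) \<Rightarrow> 'a measure \<Rightarrow> 'a \<Rightarrow> 'a" where
  "vel K vd \<mu> x = vd x - (\<integral> y. K (y - x) \<partial>\<mu>)"

definition is_solution :: "('a::euclidean_space \<Rightarrow> 'a) \<Rightarrow> ('a \<Rightarrow> 'a) \<Rightarrow> real \<Rightarrow> real
    \<Rightarrow> 'a measure \<Rightarrow> (real \<Rightarrow> 'a measure) \<Rightarrow> bool" where
  "is_solution K vd T N \<mu>bar \<mu> \<longleftrightarrow>
     (\<forall>t\<in>{0..T}. M1 N (\<mu> t)) \<and>
     (\<forall>t\<in>{0..T}. ((\<lambda>s. W1 (\<mu> s) (\<mu> t)) \<longlongrightarrow> 0) (at t within {0..T})) \<and>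
     (\<exists>\<gamma> :: real \<Rightarrow> 'a \<Rightarrow> 'a.
        (\<forall>t\<in>{0..T}. \<gamma> t \<in> borel_measurable borel \<and> \<mu> t = distr \<mu>bar borel (\<gamma> t)) \<and>
        (\<forall>t\<in>{0..T}. \<forall>x. ((\<lambda>s. vel K vd (\<mu> s) (\<gamma> s x)) has_integral (\<gamma> t x - x)) {0..t}))"

definition KN :: "('a::euclidean_space \<Rightarrow> 'a) \<Rightarrow> real \<Rightarrow> real \<Rightarrow> nat \<Rightarrow> 'a \<Rightarrow> 'a" where
  "KN Kc \<alpha> \<beta> N z = (real N powr (-\<alpha>)) *\<^sub>R Kc ((1 / real N powr \<beta>) *\<^sub>R z)"

definition empirical :: "nat \<Rightarrow> (nat \<Rightarrow> 'a::euclidean_space) \<Rightarrow> 'a measure" where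
  "empirical N X = distr (count_space {..<N}) borel X"

definition smoothed :: "nat \<Rightarrow> (nat \<Rightarrow> 'a::euclidean_space) \<Rightarrow> ('a \<Rightarrow> real) \<Rightarrow> real \<Rightarrow> 'a measure" where
  "smoothed N X f r = density lborel
     (\<lambda>x. \<Sum>i<N. ennreal (inverse (r ^ DIM('a)) * f ((1 / r) *\<^sub>R (x - X i))))"

end

theory Submission
  imports Defs
begin

text \<open>Both solutions are push-forwards of their initial data along flows, which by Gronwall
  are Lipschitz with constant \<open>exp ((Lv + LK) T)\<close>; the mean-field scaling \<open>\<alpha> + \<beta> \<ge> 1\<close> makes
  \<open>N Lip(K\<^sup>N) \<le> LK\<close> uniformly in \<open>N\<close>. Since the balls \<open>B\<^sub>r(X\<^sub>i)\<close> are disjoint, the map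
  snapping each of them to its centre pushes the smoothed datum onto the empirical one, so
  \<open>y \<mapsto> (\<gamma>\<^sub>t(snap y), \<gamma>'\<^sub>t y)\<close> couples \<open>\<epsilon>\<^sub>t\<close> and \<open>\<rho>\<^sub>t\<close>. Its cost is at most the sum of the
  distances \<open>|\<gamma>\<^sub>t X\<^sub>j - \<gamma>'\<^sub>t X\<^sub>j|\<close> plus \<open>N r\<close> times the Lipschitz constant, and a second
  Gronwall argument bounds that sum by a multiple of \<open>N r\<close> as well. Hence
  \<open>W\<^sub>1(\<epsilon>\<^sub>t, \<rho>\<^sub>t) = O(N r\<^sub>N) \<rightarrow> 0\<close>.\<close>

lemma Gronwall_integral:
  fixes \<phi> :: "real \<Rightarrow> real"
  assumes cont: "continuous_on {0..T} \<phi>" and c: "c \<ge> 0"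
    and le: "\<And>s. s \<in> {0..T} \<Longrightarrow> \<phi> s \<le> a + c * integral {0..s} \<phi>"
    and t: "t \<in> {0..T}"
  shows "\<phi> t \<le> a * exp (c * t)"
proof -
  define \<Phi> where "\<Phi> = (\<lambda>s. integral {0..s} \<phi>)"
  define \<psi> where "\<psi> s = exp (- c * s) * (a + c * \<Phi> s)" for s
  have contP: "continuous_on {0..T} \<Phi>"
    unfolding \<Phi>_def by (rule indefinite_integral_continuous_1[OF integrable_continuous_real[OF cont]])
  have cont\<psi>: "continuous_on {0..t} \<psi>"
    unfolding \<psi>_def using t by (intro continuous_intros continuous_on_subset[OF contP]) auto
  have "\<psi> t \<le> \<psi> 0"
  proof (rule DERIV_nonpos_imp_decreasing_open[OF _ _ cont\<psi>])
    show "0 \<le> t" using t by auto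
    fix s assume s: "0 < s" "s < t"
    then have sT: "s \<in> {0..T}" and si: "s \<in> interior {0..T}" using t by auto
    have "(\<Phi> has_real_derivative \<phi> s) (at s)"
      using integral_has_real_derivative[OF cont sT] at_within_interior[OF si] by (simp add: \<Phi>_def)
    then have "(\<psi> has_real_derivative c * exp (- c * s) * (\<phi> s - (a + c * \<Phi> s))) (at s)"
      unfolding \<psi>_def by (auto intro!: derivative_eq_intros simp: algebra_simps)
    moreover have "c * exp (- c * s) * (\<phi> s - (a + c * \<Phi> s)) \<le> 0"
      using le[OF sT] c unfolding \<Phi>_def by (intro mult_nonneg_nonpos) auto
    ultimately show "\<exists>y. (\<psi> has_real_derivative y) (at s) \<and> y \<le> 0" by blast
  qed
  then have "exp (- c * t) * (a + c * \<Phi> t) \<le> a" by (simp add: \<psi>_def \<Phi>_def)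
  then have "a + c * \<Phi> t \<le> a * exp (c * t)"
    by (simp add: exp_minus field_simps)
  with le[OF t] show ?thesis unfolding \<Phi>_def by simp
qed

lemma has_integral_primitive_continuous_on:
  fixes g :: "real \<Rightarrow> 'b::euclidean_space"
  assumes "\<And>t. t \<in> {0..T} \<Longrightarrow> (v has_integral (g t - x)) {0..t}"
  shows "continuous_on {0..T} g"
proof (cases "T \<ge> 0")
  case True
  have "v integrable_on {0..T}" using assms[of T] True by (auto intro: has_integral_integrable)
  then have "continuous_on {0..T} (\<lambda>t. x + integral {0..t} v)"
    by (intro continuous_intros indefinite_integral_continuous_1)
  moreover have "x + integral {0..t} v = g t" if "t \<in> {0..T}" for t
    using integral_unique[OF assms[OF that]] by simp
  ultimately show ?thesis using continuous_on_eq by blast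
qed simp

lemma KN_lipschitz:
  fixes Kc :: "'a::euclidean_space \<Rightarrow> 'a"
  assumes LK: "LK-lipschitz_on UNIV Kc" and N: "N \<ge> 1" and ab: "\<alpha> + \<beta> \<ge> 1"
  shows "(LK / real N)-lipschitz_on UNIV (KN Kc \<alpha> \<beta> N)"
proof -
  have N0: "real N > 0" using N by simp
  have LK0: "LK \<ge> 0" using lipschitz_on_nonneg[OF LK] .
  have "(1 / real N powr \<beta>)-lipschitz_on UNIV (\<lambda>z::'a. (1 / real N powr \<beta>) *\<^sub>R z)"
    using lipschitz_on_cmult_nonneg[OF lipschitz_on_id, of "1 / real N powr \<beta>"] by simp
  then have "(LK * (1 / real N powr \<beta>))-lipschitz_on UNIV (\<lambda>z. Kc ((1 / real N powr \<beta>) *\<^sub>R z))"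
    by (rule lipschitz_on_compose2) (rule lipschitz_on_subset[OF LK], simp)
  then have lip: "(real N powr (-\<alpha>) * (LK * (1 / real N powr \<beta>)))-lipschitz_on UNIV (KN Kc \<alpha> \<beta> N)"
    unfolding KN_def by (rule lipschitz_on_cmult_nonneg) simp
  have "real N powr (-\<alpha>) * (LK * (1 / real N powr \<beta>)) = LK / real N powr (\<alpha> + \<beta>)"
    by (simp add: powr_minus_divide flip: powr_add)
  also have "\<dots> \<le> LK / real N powr 1"
    using ab N LK0 by (intro divide_left_mono powr_mono) auto
  also have "\<dots> = LK / real N"
    using N0 by simp
  finally show ?thesis using lip by (metis lipschitz_on_le)
qed

lemma bounded_range_if_compact_support:
  fixes K :: "'a::euclidean_space \<Rightarrow> 'b::real_normed_vector"
  assumes "continuous_on UNIV K" and "closure {z. K z \<noteq> 0} \<subseteq> ball 0 R"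
  shows "bounded (range K)"
proof -
  have "K z \<in> insert 0 (K ` cball 0 R)" for z
    using assms(2) closure_subset[of "{z. K z \<noteq> 0}"] by (cases "K z = 0") auto
  then have "range K \<subseteq> insert 0 (K ` cball 0 R)" by blast
  moreover have "compact (K ` cball 0 R)"
    by (intro compact_continuous_image continuous_on_subset[OF assms(1)]) auto
  ultimately show ?thesis
    by (meson bounded_insert bounded_subset compact_imp_bounded)
qed

lemma KN_bounded:
  assumes "bounded (range Kc)" shows "bounded (range (KN Kc \<alpha> \<beta> N))"
proof -
  have "range (KN Kc \<alpha> \<beta> N) \<subseteq> (\<lambda>v. real N powr (-\<alpha>) *\<^sub>R v) ` range Kc"
    unfolding KN_def by auto
  then show ?thesis using bounded_scaling[OF assms] bounded_subset by blast
qed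

lemma M1_finite_measure: "M1 c M \<Longrightarrow> finite_measure M"
  unfolding M1_def by (intro finite_measureI) auto

lemma M1_measure_space: "M1 (real N) M \<Longrightarrow> measure M (space M) = real N"
  unfolding M1_def by (simp add: measure_def)

locale interaction =
  fixes K vd :: "'a::euclidean_space \<Rightarrow> 'a" and Lv LK :: real and N :: nat
  assumes vd_lipschitz: "Lv-lipschitz_on UNIV vd"
    and K_lipschitz: "(LK / real N)-lipschitz_on UNIV K"
    and K_bounded: "bounded (range K)"
    and N_pos: "N \<ge> 1"
begin

lemma Lv_nonneg: "Lv \<ge> 0"
  using lipschitz_on_nonneg[OF vd_lipschitz] .

lemma LK_nonneg: "LK \<ge> 0"
  using lipschitz_on_nonneg[OF K_lipschitz] N_pos by (simp add: zero_le_divide_iff)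

lemma K_measurable[measurable]: "K \<in> borel_measurable borel"
  using borel_measurable_continuous_onI[OF lipschitz_on_continuous_on[OF K_lipschitz]] .

lemma norm_K_diff_le: "norm (K x - K y) \<le> LK / real N * norm (x - y)"
  using lipschitz_on_normD[OF K_lipschitz] by simp

lemma integrable_K_shift:
  assumes "finite_measure M" and "q \<in> borel_measurable M"
  shows "integrable M (\<lambda>y. K (q y - u))"
proof -
  interpret finite_measure M by fact
  obtain B where "\<And>z. norm (K z) \<le> B"
    using K_bounded unfolding bounded_iff by blast
  then show ?thesis
    using assms(2) by (intro integrable_const_bound[where B=B]) auto
qed

lemma norm_vel_diff_le:
  "norm (vel K vd M u - vel K vd M' w)
    \<le> Lv * norm (u - w) + norm ((\<integral>z. K (z - u) \<partial>M) - (\<integral>z. K (z - w) \<partial>M'))"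
proof -
  have "vel K vd M u - vel K vd M' w = (vd u - vd w) - ((\<integral>z. K (z - u) \<partial>M) - (\<integral>z. K (z - w) \<partial>M'))"
    unfolding vel_def by (simp add: algebra_simps)
  then have "norm (vel K vd M u - vel K vd M' w)
      \<le> norm (vd u - vd w) + norm ((\<integral>z. K (z - u) \<partial>M) - (\<integral>z. K (z - w) \<partial>M'))"
    by (simp only: norm_triangle_ineq4)
  moreover have "norm (vd u - vd w) \<le> Lv * norm (u - w)"
    using lipschitz_on_normD[OF vd_lipschitz] by simp
  ultimately show ?thesis by simp
qed

lemma vel_lipschitz:
  assumes M: "M1 (real N) M"
  shows "norm (vel K vd M u - vel K vd M w) \<le> (Lv + LK) * norm (u - w)"
proof -
  have fin: "finite_measure M" using M1_finite_measure[OF M] .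
  have "sets M = sets borel" using M unfolding M1_def by simp
  then have "id \<in> borel_measurable M"
    unfolding id_def by (rule measurable_ident_sets)
  then have iu: "integrable M (\<lambda>y. K (y - u))" and iw: "integrable M (\<lambda>y. K (y - w))"
    using integrable_K_shift[OF fin] by (simp_all add: id_def)
  have "norm ((\<integral>y. K (y - u) \<partial>M) - (\<integral>y. K (y - w) \<partial>M)) = norm (\<integral>y. K (y - u) - K (y - w) \<partial>M)"
    using iu iw by simp
  also have "\<dots> \<le> (\<integral>y. LK / real N * norm (u - w) \<partial>M)"
  proof (rule integral_mono[THEN order_trans[OF integral_norm_bound]])
    show "integrable M (\<lambda>y. norm (K (y - u) - K (y - w)))" using iu iw by simp
    show "integrable M (\<lambda>y. LK / real N * norm (u - w))"
      by (rule finite_measure.integrable_const[OF fin])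
    show "norm (K (y - u) - K (y - w)) \<le> LK / real N * norm (u - w)" for y
      using norm_K_diff_le[of "y - u" "y - w"] by (simp add: norm_minus_commute)
  qed
  also have "\<dots> = LK * norm (u - w)"
    using M1_measure_space[OF M] N_pos by simp
  finally show ?thesis
    using norm_vel_diff_le[of M u M w] by (simp add: algebra_simps)
qed

end

locale flow = interaction +
  fixes T :: real and \<mu>0 :: "'a::euclidean_space measure" and \<mu> :: "real \<Rightarrow> 'a measure" and \<gamma> :: "real \<Rightarrow> 'a \<Rightarrow> 'a"
  assumes T_nonneg: "T \<ge> 0"
    and M1_curve: "\<And>t. t \<in> {0..T} \<Longrightarrow> M1 (real N) (\<mu> t)"
    and flow_measurable: "\<And>t. t \<in> {0..T} \<Longrightarrow> \<gamma> t \<in> borel_measurable borel"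
    and push_forward: "\<And>t. t \<in> {0..T} \<Longrightarrow> \<mu> t = distr \<mu>0 borel (\<gamma> t)"
    and flow_integral: "\<And>t x. t \<in> {0..T} \<Longrightarrow>
        ((\<lambda>s. vel K vd (\<mu> s) (\<gamma> s x)) has_integral (\<gamma> t x - x)) {0..t}"
begin

lemma flow_continuous: "continuous_on {0..T} (\<lambda>s. \<gamma> s x)"
  by (rule has_integral_primitive_continuous_on[OF flow_integral])

lemma flow_lipschitz:
  assumes t: "t \<in> {0..T}"
  shows "norm (\<gamma> t x - \<gamma> t y) \<le> exp ((Lv + LK) * T) * norm (x - y)"
proof -
  define \<phi> where "\<phi> s = norm (\<gamma> s x - \<gamma> s y)" for s
  have cont: "continuous_on {0..T} \<phi>"
    unfolding \<phi>_def by (intro continuous_intros flow_continuous)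
  have "\<phi> s \<le> norm (x - y) + (Lv + LK) * integral {0..s} \<phi>" if s: "s \<in> {0..T}" for s
  proof -
    define G where "G \<sigma> = vel K vd (\<mu> \<sigma>) (\<gamma> \<sigma> x) - vel K vd (\<mu> \<sigma>) (\<gamma> \<sigma> y)" for \<sigma>
    have G: "(G has_integral ((\<gamma> s x - x) - (\<gamma> s y - y))) {0..s}"
      unfolding G_def by (intro has_integral_diff flow_integral s)
    have sub: "{0..s} \<subseteq> {0..T}" using s by auto
    have "norm (integral {0..s} G) \<le> integral {0..s} (\<lambda>\<sigma>. (Lv + LK) * \<phi> \<sigma>)"
    proof (rule integral_norm_bound_integral)
      show "G integrable_on {0..s}" using G by blast
      show "(\<lambda>\<sigma>. (Lv + LK) * \<phi> \<sigma>) integrable_on {0..s}"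
        by (intro integrable_continuous_real continuous_intros continuous_on_subset[OF cont sub])
      show "norm (G \<sigma>) \<le> (Lv + LK) * \<phi> \<sigma>" if "\<sigma> \<in> {0..s}" for \<sigma>
        unfolding G_def \<phi>_def using that sub by (intro vel_lipschitz M1_curve) auto
    qed
    moreover have "\<gamma> s x - \<gamma> s y = (x - y) + integral {0..s} G"
      using integral_unique[OF G] by simp
    ultimately show ?thesis
      unfolding \<phi>_def using norm_triangle_ineq[of "x - y" "integral {0..s} G"] by simp
  qed
  then have "\<phi> t \<le> norm (x - y) * exp ((Lv + LK) * t)"
    using Gronwall_integral[OF cont _ _ t] Lv_nonneg LK_nonneg by simp
  also have "\<dots> \<le> norm (x - y) * exp ((Lv + LK) * T)"
    using t Lv_nonneg LK_nonneg by (intro mult_left_mono) (auto intro!: mult_left_mono)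
  finally show ?thesis by (simp add: \<phi>_def mult.commute)
qed

end

lemma is_solution_imp_flow:
  assumes "interaction K vd Lv LK N" and "T \<ge> 0" and "is_solution K vd T (real N) \<mu>0 \<mu>"
  obtains \<gamma> where "flow K vd Lv LK N T \<mu>0 \<mu> \<gamma>"
  using assms unfolding is_solution_def flow_def flow_axioms_def by blast

locale separated_bumps =
  fixes N :: nat and X :: "nat \<Rightarrow> 'a::euclidean_space" and f :: "'a \<Rightarrow> real" and r :: real
  assumes N_pos: "N \<ge> 1" and r_pos: "r > 0"
    and separated: "\<And>i j. i < N \<Longrightarrow> j < N \<Longrightarrow> i \<noteq> j \<Longrightarrow> r < dist (X j) (X i) / 2"
    and f_nonneg: "\<And>x. f x \<ge> 0"
    and f_outside: "\<And>x. x \<notin> cball 0 1 \<Longrightarrow> f x = 0"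
    and f_measurable: "f \<in> borel_measurable borel"
    and smoothed_mass: "emeasure (smoothed N X f r) UNIV = of_nat N"
begin

definition bump :: "nat \<Rightarrow> 'a \<Rightarrow> real" where
  "bump j y = inverse (r ^ DIM('a)) * f ((1 / r) *\<^sub>R (y - X j))"

definition snap :: "'a \<Rightarrow> 'a" where
  "snap y = (\<Sum>i<N. indicator (cball (X i) r) y *\<^sub>R X i)"

lemma bump_measurable[measurable]: "bump j \<in> borel_measurable borel"
  unfolding bump_def using f_measurable by measurable

lemma snap_measurable[measurable]: "snap \<in> borel_measurable borel"
  unfolding snap_def by (intro borel_measurable_sum borel_measurable_scaleR borel_measurable_indicator) auto

lemma mem_cball_if_bump_nonzero:
  assumes "bump j y \<noteq> 0" shows "y \<in> cball (X j) r"
proof (rule ccontr)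
  assume "y \<notin> cball (X j) r"
  then have "r < norm (y - X j)"
    by (simp add: dist_norm norm_minus_commute)
  moreover have "norm ((1 / r) *\<^sub>R (y - X j)) = norm (y - X j) / r"
    using r_pos by (simp only: norm_scaleR) simp
  ultimately have "norm ((1 / r) *\<^sub>R (y - X j)) > 1"
    using r_pos by simp
  then show False
    using assms f_outside unfolding bump_def by simp
qed

lemma snap_eq:
  assumes j: "j < N" and y: "y \<in> cball (X j) r"
  shows "snap y = X j"
proof -
  have "y \<notin> cball (X i) r" if "i < N" "i \<noteq> j" for i
  proof
    assume "y \<in> cball (X i) r"
    then have "dist (X j) (X i) \<le> 2 * r"
      using y dist_triangle[of "X j" "X i" y] by (simp add: dist_commute)
    with separated[OF that(1) j that(2)] show False by simp
  qed
  then have "snap y = (\<Sum>i<N. if i = j then X j else 0)"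
    unfolding snap_def using y by (intro sum.cong) auto
  then show ?thesis using j by simp
qed

lemma snap_eq_if_bump_nonzero: "j < N \<Longrightarrow> bump j y \<noteq> 0 \<Longrightarrow> snap y = X j"
  by (rule snap_eq[OF _ mem_cball_if_bump_nonzero])

lemma smoothed_eq: "smoothed N X f r = density lborel (\<lambda>y. \<Sum>i<N. ennreal (bump i y))"
  unfolding smoothed_def bump_def ..

lemma sets_smoothed[measurable_cong, simp]: "sets (smoothed N X f r) = sets borel"
  and space_smoothed[simp]: "space (smoothed N X f r) = UNIV"
  unfolding smoothed_eq by simp_all

lemma finite_measure_smoothed: "finite_measure (smoothed N X f r)"
  using smoothed_mass by (intro finite_measureI) simp

lemma nn_integral_smoothed:
  assumes [measurable]: "h \<in> borel_measurable borel"
  shows "(\<integral>\<^sup>+ y. h y \<partial>smoothed N X f r) = (\<Sum>j<N. \<integral>\<^sup>+ y. ennreal (bump j y) * h y \<partial>lborel)"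
  unfolding smoothed_eq
  by (simp add: nn_integral_density sum_distrib_right nn_integral_sum)

lemma nn_integral_bump_translate:
  "(\<integral>\<^sup>+ y. ennreal (bump j y) \<partial>lborel)
    = (\<integral>\<^sup>+ y. ennreal (inverse (r ^ DIM('a)) * f ((1 / r) *\<^sub>R y)) \<partial>lborel)"
proof -
  have "(\<integral>\<^sup>+ y. ennreal (bump j y) \<partial>lborel)
      = (\<integral>\<^sup>+ y. ennreal (bump j y) \<partial>distr lborel borel ((+) (X j)))"
    by (simp add: lborel_distr_plus)
  also have "\<dots> = (\<integral>\<^sup>+ y. ennreal (bump j (X j + y)) \<partial>lborel)"
    by (subst nn_integral_distr) auto
  also have "\<dots> = (\<integral>\<^sup>+ y. ennreal (inverse (r ^ DIM('a)) * f ((1 / r) *\<^sub>R y)) \<partial>lborel)"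
    by (simp add: bump_def)
  finally show ?thesis .
qed

lemma nn_integral_bump: "(\<integral>\<^sup>+ y. ennreal (bump j y) \<partial>lborel) = 1"
proof -
  define m where "m = (\<integral>\<^sup>+ y. ennreal (inverse (r ^ DIM('a)) * f ((1 / r) *\<^sub>R y)) \<partial>lborel)"
  have "of_nat N = of_nat N * m"
    using smoothed_mass nn_integral_smoothed[of "\<lambda>_. 1"]
    by (simp add: nn_integral_bump_translate m_def)
  then have "m = 1"
    using N_pos by (cases m) (auto simp: ennreal_of_nat_eq_real_of_nat ennreal_mult[symmetric] ennreal_mult_eq_top_iff)
  then show ?thesis
    by (simp add: nn_integral_bump_translate m_def)
qed

lemma nn_integral_smoothed_snap:
  assumes [measurable]: "F \<in> borel_measurable borel"
  shows "(\<integral>\<^sup>+ y. F (snap y) \<partial>smoothed N X f r) = (\<Sum>j<N. F (X j))"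
proof -
  have "(\<integral>\<^sup>+ y. ennreal (bump j y) * F (snap y) \<partial>lborel)
      = (\<integral>\<^sup>+ y. ennreal (bump j y) * F (X j) \<partial>lborel)" if "j < N" for j
    using snap_eq_if_bump_nonzero[OF that] by (intro nn_integral_cong) (metis ennreal_0 mult_zero_left)
  then show ?thesis
    by (simp add: nn_integral_smoothed nn_integral_multc nn_integral_bump)
qed

lemma distr_smoothed_snap:
  assumes [measurable]: "h \<in> borel_measurable borel"
  shows "distr (smoothed N X f r) borel (\<lambda>y. h (snap y)) = distr (empirical N X) borel h"
proof (rule measure_eqI)
  fix A assume A[measurable]: "A \<in> sets (distr (smoothed N X f r) borel (\<lambda>y. h (snap y)))"
  have "emeasure (distr (smoothed N X f r) borel (\<lambda>y. h (snap y))) A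
      = (\<integral>\<^sup>+ y. indicator A y \<partial>distr (smoothed N X f r) borel (\<lambda>y. h (snap y)))"
    using A by simp
  also have "\<dots> = (\<integral>\<^sup>+ y. indicator A (h (snap y)) \<partial>smoothed N X f r)"
    by (subst nn_integral_distr) auto
  also have "\<dots> = (\<Sum>j<N. indicator A (h (X j)))"
    by (rule nn_integral_smoothed_snap) measurable
  also have "\<dots> = (\<integral>\<^sup>+ x. indicator A (h x) \<partial>empirical N X)"
    unfolding empirical_def by (subst nn_integral_distr) (auto simp: nn_integral_count_space_finite)
  also have "\<dots> = (\<integral>\<^sup>+ y. indicator A y \<partial>distr (empirical N X) borel h)"
    unfolding empirical_def by (subst nn_integral_distr) auto
  also have "\<dots> = emeasure (distr (empirical N X) borel h) A"
    using A by simp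
  finally show "emeasure (distr (smoothed N X f r) borel (\<lambda>y. h (snap y))) A
      = emeasure (distr (empirical N X) borel h) A" .
qed simp

end

locale comparison =
  separated_bumps N X f r + interaction K vd Lv LK N +
  emp: flow K vd Lv LK N T "empirical N X" \<mu> \<gamma> +
  smo: flow K vd Lv LK N T "smoothed N X f r" \<nu> \<gamma>'
  for N X f r K vd Lv LK T \<mu> \<nu> \<gamma> \<gamma>'
begin

abbreviation "stretch \<equiv> exp ((Lv + LK) * T)"

definition centre_gap :: "real \<Rightarrow> real" where
  "centre_gap s = (\<Sum>j<N. norm (\<gamma> s (X j) - \<gamma>' s (X j)))"

lemma centre_gap_nonneg: "centre_gap s \<ge> 0"
  unfolding centre_gap_def by (simp add: sum_nonneg)

lemma centre_gap_continuous: "continuous_on {0..T} centre_gap"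
  unfolding centre_gap_def by (intro continuous_intros emp.flow_continuous smo.flow_continuous)

lemma snap_distance_measurable[measurable]:
  "s \<in> {0..T} \<Longrightarrow> (\<lambda>y. norm (\<gamma> s (snap y) - \<gamma>' s y)) \<in> borel_measurable borel"
  using emp.flow_measurable smo.flow_measurable by measurable

lemma snap_distance_le:
  assumes s: "s \<in> {0..T}" and j: "j < N" and y: "bump j y \<noteq> 0"
  shows "norm (\<gamma> s (snap y) - \<gamma>' s y) \<le> norm (\<gamma> s (X j) - \<gamma>' s (X j)) + stretch * r"
proof -
  have "norm (\<gamma>' s (X j) - \<gamma>' s y) \<le> stretch * norm (X j - y)"
    by (rule smo.flow_lipschitz[OF s])
  also have "\<dots> \<le> stretch * r"
    using mem_cball_if_bump_nonzero[OF y] by (simp add: dist_norm)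
  finally show ?thesis
    using snap_eq_if_bump_nonzero[OF j y]
      norm_triangle_ineq[of "\<gamma> s (X j) - \<gamma>' s (X j)" "\<gamma>' s (X j) - \<gamma>' s y"] by simp
qed

lemma nn_integral_snap_distance_le:
  assumes s: "s \<in> {0..T}"
  shows "(\<integral>\<^sup>+ y. norm (\<gamma> s (snap y) - \<gamma>' s y) \<partial>smoothed N X f r)
    \<le> ennreal (centre_gap s + real N * stretch * r)"
proof -
  have "(\<integral>\<^sup>+ y. norm (\<gamma> s (snap y) - \<gamma>' s y) \<partial>smoothed N X f r)
      = (\<Sum>j<N. \<integral>\<^sup>+ y. ennreal (bump j y) * norm (\<gamma> s (snap y) - \<gamma>' s y) \<partial>lborel)"
    using s by (intro nn_integral_smoothed) measurable
  also have "\<dots> \<le> (\<Sum>j<N. \<integral>\<^sup>+ y. ennreal (bump j y)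
      * ennreal (norm (\<gamma> s (X j) - \<gamma>' s (X j)) + stretch * r) \<partial>lborel)"
    using snap_distance_le[OF s]
    by (intro sum_mono nn_integral_mono) (metis ennreal_0 ennreal_leI mult_left_mono mult_zero_left zero_le lessThan_iff)
  also have "\<dots> = (\<Sum>j<N. ennreal (norm (\<gamma> s (X j) - \<gamma>' s (X j)) + stretch * r))"
    by (simp add: nn_integral_multc nn_integral_bump)
  also have "\<dots> = ennreal (\<Sum>j<N. norm (\<gamma> s (X j) - \<gamma>' s (X j)) + stretch * r)"
    using r_pos by (intro sum_ennreal) simp
  finally show ?thesis
    by (simp add: centre_gap_def sum.distrib mult.assoc)
qed

lemma integrable_snap_distance:
  assumes s: "s \<in> {0..T}"
  shows "integrable (smoothed N X f r) (\<lambda>y. norm (\<gamma> s (snap y) - \<gamma>' s y))"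
proof (rule integrableI_bounded)
  show "(\<integral>\<^sup>+ y. ennreal (norm (norm (\<gamma> s (snap y) - \<gamma>' s y))) \<partial>smoothed N X f r) < \<infinity>"
    using nn_integral_snap_distance_le[OF s] by (simp add: le_less_trans)
qed (use s in measurable)

lemma integral_snap_distance_le:
  assumes s: "s \<in> {0..T}"
  shows "(\<integral>y. norm (\<gamma> s (snap y) - \<gamma>' s y) \<partial>smoothed N X f r) \<le> centre_gap s + real N * stretch * r"
proof -
  have "ennreal (\<integral>y. norm (\<gamma> s (snap y) - \<gamma>' s y) \<partial>smoothed N X f r)
      \<le> ennreal (centre_gap s + real N * stretch * r)"
    using nn_integral_snap_distance_le[OF s] integrable_snap_distance[OF s]
    by (subst nn_integral_eq_integral[symmetric]) auto
  then show ?thesis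
    using centre_gap_nonneg r_pos by (subst (asm) ennreal_le_iff) auto
qed

lemma push_forward_snap:
  assumes "t \<in> {0..T}" shows "\<mu> t = distr (smoothed N X f r) borel (\<lambda>y. \<gamma> t (snap y))"
  using emp.push_forward[OF assms] distr_smoothed_snap[OF emp.flow_measurable[OF assms]] by simp

lemma W1_le_centre_gap:
  assumes t: "t \<in> {0..T}"
  shows "W1 (\<mu> t) (\<nu> t) \<le> ennreal (centre_gap t + real N * stretch * r)"
proof -
  note [measurable] = emp.flow_measurable[OF t] smo.flow_measurable[OF t]
  define \<pi> where "\<pi> = distr (smoothed N X f r) borel (\<lambda>y. (\<gamma> t (snap y), \<gamma>' t y))"
  have [measurable]: "fst \<in> borel_measurable (borel :: ('a \<times> 'a) measure)"
    "snd \<in> borel_measurable (borel :: ('a \<times> 'a) measure)"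
    by (intro borel_measurable_continuous_onI continuous_intros)+
  have "\<pi> \<in> couplings (\<mu> t) (\<nu> t)"
    unfolding couplings_def \<pi>_def
    using push_forward_snap[OF t] smo.push_forward[OF t]
    by (simp add: distr_distr comp_def)
  then have "W1 (\<mu> t) (\<nu> t) \<le> (\<integral>\<^sup>+ q. ennreal (norm (fst q - snd q)) \<partial>\<pi>)"
    unfolding W1_def by (rule INF_lower)
  also have "\<dots> = (\<integral>\<^sup>+ y. norm (\<gamma> t (snap y) - \<gamma>' t y) \<partial>smoothed N X f r)"
    unfolding \<pi>_def by (subst nn_integral_distr) auto
  finally show ?thesis
    using nn_integral_snap_distance_le[OF t] by (rule order_trans)
qed

lemma interaction_diff_le:
  assumes s: "s \<in> {0..T}"
  shows "norm ((\<integral>z. K (z - u) \<partial>\<mu> s) - (\<integral>z. K (z - w) \<partial>\<nu> s))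
    \<le> LK / real N * (centre_gap s + real N * stretch * r) + LK * norm (u - w)"
proof -
  note [measurable] = emp.flow_measurable[OF s] smo.flow_measurable[OF s]
  let ?S = "smoothed N X f r"
  define F where "F y = K (\<gamma> s (snap y) - u) - K (\<gamma>' s y - w)" for y
  have iu: "integrable ?S (\<lambda>y. K (\<gamma> s (snap y) - u))"
    and iw: "integrable ?S (\<lambda>y. K (\<gamma>' s y - w))"
    by (intro integrable_K_shift finite_measure_smoothed; measurable)+
  have "(\<integral>z. K (z - u) \<partial>\<mu> s) - (\<integral>z. K (z - w) \<partial>\<nu> s) = (\<integral>y. F y \<partial>?S)"
    using iu iw
    by (simp add: push_forward_snap[OF s] smo.push_forward[OF s] integral_distr F_def)
  also have "norm \<dots> \<le> (\<integral>y. LK / real N * norm (\<gamma> s (snap y) - \<gamma>' s y) + LK / real N * norm (u - w) \<partial>?S)"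
  proof (rule integral_mono[THEN order_trans[OF integral_norm_bound]])
    show "integrable ?S (\<lambda>y. norm (F y))" unfolding F_def using iu iw by simp
    show "integrable ?S (\<lambda>y. LK / real N * norm (\<gamma> s (snap y) - \<gamma>' s y) + LK / real N * norm (u - w))"
      using integrable_snap_distance[OF s] finite_measure.integrable_const[OF finite_measure_smoothed]
      by (intro Bochner_Integration.integrable_add integrable_mult_right)
    show "norm (F y) \<le> LK / real N * norm (\<gamma> s (snap y) - \<gamma>' s y) + LK / real N * norm (u - w)" for y
    proof -
      have "norm (F y) \<le> LK / real N * norm ((\<gamma> s (snap y) - \<gamma>' s y) - (u - w))"
        using norm_K_diff_le[of "\<gamma> s (snap y) - u" "\<gamma>' s y - w"] by (simp add: F_def algebra_simps)
      also have "\<dots> \<le> LK / real N * (norm (\<gamma> s (snap y) - \<gamma>' s y) + norm (u - w))"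
        using LK_nonneg by (intro mult_left_mono norm_triangle_ineq4) auto
      finally show ?thesis by (simp add: distrib_left)
    qed
  qed
  also have "\<dots> = LK / real N * (\<integral>y. norm (\<gamma> s (snap y) - \<gamma>' s y) \<partial>?S) + LK * norm (u - w)"
    using integrable_snap_distance[OF s] smoothed_mass N_pos
    by (simp add: Bochner_Integration.integral_add finite_measure.integrable_const[OF finite_measure_smoothed]
        measure_def ennreal_of_nat_eq_real_of_nat)
  also have "\<dots> \<le> LK / real N * (centre_gap s + real N * stretch * r) + LK * norm (u - w)"
    using integral_snap_distance_le[OF s] LK_nonneg by (intro add_right_mono mult_left_mono) auto
  finally show ?thesis .
qed

lemma vel_diff_le:
  assumes s: "s \<in> {0..T}"
  shows "norm (vel K vd (\<mu> s) u - vel K vd (\<nu> s) w)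
    \<le> (Lv + LK) * norm (u - w) + LK / real N * (centre_gap s + real N * stretch * r)"
  using norm_vel_diff_le[of "\<mu> s" u "\<nu> s" w] interaction_diff_le[OF s, of u w]
  by (simp add: algebra_simps)

lemma norm_flow_diff_le:
  assumes s: "s \<in> {0..T}"
  shows "norm (\<gamma> s x - \<gamma>' s x) \<le> integral {0..s} (\<lambda>\<sigma>. (Lv + LK) * norm (\<gamma> \<sigma> x - \<gamma>' \<sigma> x)
      + LK / real N * (centre_gap \<sigma> + real N * stretch * r))"
proof -
  define G where "G \<sigma> = vel K vd (\<mu> \<sigma>) (\<gamma> \<sigma> x) - vel K vd (\<nu> \<sigma>) (\<gamma>' \<sigma> x)" for \<sigma>
  have G: "(G has_integral (\<gamma> s x - x) - (\<gamma>' s x - x)) {0..s}"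
    unfolding G_def by (intro has_integral_diff emp.flow_integral smo.flow_integral s)
  have sub: "{0..s} \<subseteq> {0..T}" using s by auto
  have "norm (\<gamma> s x - \<gamma>' s x) = norm (integral {0..s} G)"
    using integral_unique[OF G] by simp
  also have "\<dots> \<le> integral {0..s} (\<lambda>\<sigma>. (Lv + LK) * norm (\<gamma> \<sigma> x - \<gamma>' \<sigma> x)
      + LK / real N * (centre_gap \<sigma> + real N * stretch * r))"
  proof (rule integral_norm_bound_integral)
    show "G integrable_on {0..s}" using G by blast
    show "(\<lambda>\<sigma>. (Lv + LK) * norm (\<gamma> \<sigma> x - \<gamma>' \<sigma> x) + LK / real N * (centre_gap \<sigma> + real N * stretch * r))
        integrable_on {0..s}"
      by (intro integrable_continuous_real continuous_intros continuous_on_subset[OF _ sub]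
          emp.flow_continuous smo.flow_continuous centre_gap_continuous)
    show "norm (G \<sigma>) \<le> (Lv + LK) * norm (\<gamma> \<sigma> x - \<gamma>' \<sigma> x) + LK / real N * (centre_gap \<sigma> + real N * stretch * r)"
      if "\<sigma> \<in> {0..s}" for \<sigma>
      unfolding G_def using that sub by (intro vel_diff_le) auto
  qed
  finally show ?thesis .
qed

lemma centre_gap_integral_le:
  assumes s: "s \<in> {0..T}"
  shows "centre_gap s \<le> real N * LK * stretch * r * T + (Lv + 2 * LK) * integral {0..s} centre_gap"
proof -
  have sub: "{0..s} \<subseteq> {0..T}" using s by auto
  have cont: "continuous_on {0..s} centre_gap"
    using continuous_on_subset[OF centre_gap_continuous sub] .
  define h where "h j \<sigma> = (Lv + LK) * norm (\<gamma> \<sigma> (X j) - \<gamma>' \<sigma> (X j))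
      + LK / real N * (centre_gap \<sigma> + real N * stretch * r)" for j \<sigma>
  have h: "h j integrable_on {0..s}" for j
    unfolding h_def
    by (intro integrable_continuous_real continuous_intros continuous_on_subset[OF _ sub]
        emp.flow_continuous smo.flow_continuous centre_gap_continuous)
  have sum_h: "(\<Sum>j<N. h j \<sigma>) = (Lv + 2 * LK) * centre_gap \<sigma> + real N * LK * stretch * r" for \<sigma>
    using N_pos unfolding h_def centre_gap_def
    by (simp add: sum.distrib sum_distrib_left[symmetric] algebra_simps)
  have "centre_gap s \<le> (\<Sum>j<N. integral {0..s} (h j))"
    unfolding centre_gap_def[of s] h_def by (intro sum_mono norm_flow_diff_le[OF s])
  also have "\<dots> = integral {0..s} (\<lambda>\<sigma>. (Lv + 2 * LK) * centre_gap \<sigma> + real N * LK * stretch * r)"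
    using h by (simp add: sum_h flip: integral_sum)
  also have "\<dots> = (Lv + 2 * LK) * integral {0..s} centre_gap + real N * LK * stretch * r * s"
    using s integrable_continuous_real[OF cont]
    by (subst integral_add) (auto intro: integrable_on_mult_right)
  also have "\<dots> \<le> (Lv + 2 * LK) * integral {0..s} centre_gap + real N * LK * stretch * r * T"
    using s r_pos LK_nonneg by (intro add_left_mono mult_left_mono) auto
  finally show ?thesis by simp
qed

lemma centre_gap_le:
  assumes t: "t \<in> {0..T}"
  shows "centre_gap t \<le> real N * LK * stretch * r * T * exp ((Lv + 2 * LK) * T)"
proof -
  have "centre_gap t \<le> real N * LK * stretch * r * T * exp ((Lv + 2 * LK) * t)"
    using Gronwall_integral[OF centre_gap_continuous _ centre_gap_integral_le t] Lv_nonneg LK_nonneg by simp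
  also have "\<dots> \<le> real N * LK * stretch * r * T * exp ((Lv + 2 * LK) * T)"
    using t r_pos LK_nonneg Lv_nonneg emp.T_nonneg by (intro mult_left_mono) (auto intro!: mult_left_mono)
  finally show ?thesis .
qed

lemma W1_le:
  assumes t: "t \<in> {0..T}"
  shows "W1 (\<mu> t) (\<nu> t) \<le> ennreal (real N * r * (LK * T * stretch * exp ((Lv + 2 * LK) * T) + stretch))"
proof -
  have "centre_gap t + real N * stretch * r
      \<le> real N * r * (LK * T * stretch * exp ((Lv + 2 * LK) * T) + stretch)"
    using centre_gap_le[OF t] by (simp add: algebra_simps)
  then show ?thesis
    using W1_le_centre_gap[OF t] by (meson ennreal_leI order_trans)
qed

end

lemma interaction_KN:
  assumes "Lv-lipschitz_on UNIV vd" and "LK-lipschitz_on UNIV Kc" and "bounded (range Kc)"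
    and "N \<ge> 1" and "\<alpha> + \<beta> \<ge> 1"
  shows "interaction (KN Kc \<alpha> \<beta> N) vd Lv LK N"
  using assms KN_lipschitz KN_bounded by unfold_locales auto

lemma W1_empirical_smoothed_le:
  fixes K vd :: "'a::euclidean_space \<Rightarrow> 'a"
  assumes K: "interaction K vd Lv LK N" and T: "T \<ge> 0" and r: "r > 0"
    and separated: "\<And>i j. i < N \<Longrightarrow> j < N \<Longrightarrow> i \<noteq> j \<Longrightarrow> r < dist (X j) (X i) / 2"
    and f: "\<And>x. f x \<ge> 0" "\<And>x. x \<notin> cball 0 1 \<Longrightarrow> f x = 0" "f \<in> borel_measurable borel"
    and \<mu>: "is_solution K vd T (real N) (empirical N X) \<mu>"
    and \<nu>: "is_solution K vd T (real N) (smoothed N X f r) \<nu>"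
    and t: "t \<in> {0..T}"
  shows "W1 (\<mu> t) (\<nu> t) \<le> ennreal (real N * r * (LK * T * exp ((Lv + LK) * T)
      * exp ((Lv + 2 * LK) * T) + exp ((Lv + LK) * T)))"
proof -
  obtain \<gamma> where \<gamma>: "flow K vd Lv LK N T (empirical N X) \<mu> \<gamma>"
    using is_solution_imp_flow[OF K T \<mu>] .
  obtain \<gamma>' where \<gamma>': "flow K vd Lv LK N T (smoothed N X f r) \<nu> \<gamma>'"
    using is_solution_imp_flow[OF K T \<nu>] .
  have "emeasure (smoothed N X f r) UNIV = emeasure (\<nu> 0) (space (\<nu> 0))"
    using T flow.push_forward[OF \<gamma>', of 0] flow.flow_measurable[OF \<gamma>', of 0]
    by (simp add: emeasure_distr smoothed_def)
  also have "\<dots> = of_nat N"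
    using T flow.M1_curve[OF \<gamma>', of 0] by (simp add: M1_def ennreal_of_nat_eq_real_of_nat)
  finally have "emeasure (smoothed N X f r) UNIV = of_nat N" .
  then interpret comparison N X f r K vd Lv LK T \<mu> \<nu> \<gamma> \<gamma>'
    using K \<gamma> \<gamma>' r separated f interaction.N_pos[OF K]
    by (intro_locales; simp add: separated_bumps_def flow_def)
  show ?thesis by (rule W1_le[OF t])
qed

theorem mainTheorem9:
  fixes vd Kc :: "'a::euclidean_space \<Rightarrow> 'a"
    and T R \<alpha> \<beta> :: real
    and X :: "nat \<Rightarrow> nat \<Rightarrow> 'a"
    and f :: "'a \<Rightarrow> real"
    and r :: "nat \<Rightarrow> real"
    and \<epsilon> \<rho> :: "nat \<Rightarrow> real \<Rightarrow> 'a measure"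
  assumes T: "T > 0"
    and vd_lip: "\<exists>L. L-lipschitz_on UNIV vd"
    and K_lip: "\<exists>L. L-lipschitz_on UNIV Kc"
    and K_supp: "closure {z. Kc z \<noteq> 0} \<subseteq> ball 0 R"
    and ab: "\<alpha> + \<beta> \<ge> 1"
    and X_dist: "\<And>N. N \<ge> 1 \<Longrightarrow> inj_on (X N) {..<N}"
    and f_nonneg: "\<And>x. f x \<ge> 0"
    and f_supp: "\<And>x. x \<notin> cball 0 1 \<Longrightarrow> f x = 0"
    and f_meas: "f \<in> borel_measurable borel"
    and f_int: "(\<integral>\<^sup>+ x\<in>ball 0 1. ennreal (f x) \<partial>lborel) = 1"
    and r_pos: "\<And>N. N \<ge> 1 \<Longrightarrow> r N > 0"
    and r_sep: "\<And>N i j. N \<ge> 1 \<Longrightarrow> i < N \<Longrightarrow> j < N \<Longrightarrow> i \<noteq> j \<Longrightarrow>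
                  r N < dist (X N j) (X N i) / 2"
    and eps_sol: "\<And>N. N \<ge> 1 \<Longrightarrow>
        is_solution (KN Kc \<alpha> \<beta> N) vd T (real N) (empirical N (X N)) (\<epsilon> N)"
    and rho_sol: "\<And>N. N \<ge> 1 \<Longrightarrow>
        is_solution (KN Kc \<alpha> \<beta> N) vd T (real N) (smoothed N (X N) f (r N)) (\<rho> N)"
    and r_small: "r \<in> o(\<lambda>N. inverse (real N))"
  shows "\<forall>t\<in>{0<..T}. (\<lambda>N. W1 (\<epsilon> N t) (\<rho> N t)) \<longlonglongrightarrow> 0"
proof
  fix t assume t: "t \<in> {0<..T}"
  obtain Lv LK where Lv: "Lv-lipschitz_on UNIV vd" and LK: "LK-lipschitz_on UNIV Kc"
    using vd_lip K_lip by blast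
  have "bounded (range Kc)"
    using bounded_range_if_compact_support[OF lipschitz_on_continuous_on[OF LK] K_supp] .
  define C where "C = LK * T * exp ((Lv + LK) * T) * exp ((Lv + 2 * LK) * T) + exp ((Lv + LK) * T)"
  have bound: "\<forall>\<^sub>F N in sequentially. W1 (\<epsilon> N t) (\<rho> N t) \<le> ennreal (real N * r N * C)"
    using eventually_ge_at_top[of 1]
  proof eventually_elim
    case (elim N)
    show ?case
      unfolding C_def using t T
      by (intro W1_empirical_smoothed_le[OF interaction_KN[OF Lv LK \<open>bounded _\<close> elim ab] _
          r_pos[OF elim] r_sep[OF elim] f_nonneg f_supp f_meas eps_sol[OF elim] rho_sol[OF elim]]) auto
  qed
  have "(\<lambda>N. real N * r N) \<longlonglongrightarrow> 0"
    using smalloD_tendsto[OF r_small] by (simp add: divide_inverse_commute)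
  then have "(\<lambda>N. ennreal (real N * r N * C)) \<longlonglongrightarrow> ennreal 0"
    by (intro tendsto_ennrealI tendsto_mult_left_zero)
  then show "(\<lambda>N. W1 (\<epsilon> N t) (\<rho> N t)) \<longlonglongrightarrow> 0"
    using tendsto_sandwich[OF eventuallyI[OF zero_le] bound tendsto_const] by simp
qed

end
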